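(* Let $\mathcal{C}_1$ be an even-like $[n,k_1,d_1]_2$ binary linear code, let $\mathcal{C}_2$ be the $[n,1,n]_2$ repetition code generated by the all-ones vector, and let $\mathcal{C}=\{(\mathbf{u},\mathbf{u}+\mathbf{v}):\mathbf{u}\in\mathcal{C}_1,\mathbf{v}\in\mathcal{C}_2\}$. Then: 1) $\mathcal{C}$ is a $[2n,k_1+1,\min\{2d_1,n\}]_2$ odd-like code if and only if $\mathcal{C}$ is a binary almost Euclidean self-orthogonal code; 2) $\mathcal{C}$ is a $[2n,k_1+1,\min\{2d_1,n\}]_2$ even-like code if and only if $\mathcal{C}$ is a binary Euclidean self-orthogonal code.
   Context: A binary code is even-like if every codeword has even Hamming weight, and odd-like otherwise. For a binary $[N,k,d]_2$ code $\mathcal{C}$, $\mathrm{Hull}_E(\mathcal{C})=\mathcal{C}\cap\mathcal{C}^{\perp_E}$ with $\perp_E$ the dual under $\sum_ix_iy_i$; $\mathcal{C}$ is Euclidean self-orthogonal if $\dim(\mathrm{Hull}_E(\mathcal{C}))=k$ and almost Euclidean self-orthogonal if $\dim(\mathrm{Hull}_E(\mathcal{C}))=k-1$. *)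

theory Defs
  imports Main "HOL-Library.Z2"
begin

type_synonym bvec = "nat \<Rightarrow> bit"

definition vecs :: "nat \<Rightarrow> bvec set" where
  "vecs n = {x. \<forall>i\<ge>n. x i = 0}"

definition vzero :: bvec where
  "vzero = (\<lambda>i. 0)"

definition vadd :: "bvec \<Rightarrow> bvec \<Rightarrow> bvec" where
  "vadd x y = (\<lambda>i. x i + y i)"

definition ones :: "nat \<Rightarrow> bvec" where
  "ones n = (\<lambda>i. if i < n then 1 else 0)"

definition vsum :: "bvec set \<Rightarrow> bvec" where
  "vsum S = (\<lambda>i. \<Sum>b\<in>S. b i)"

definition wt :: "bvec \<Rightarrow> nat" where
  "wt x = card {i. x i \<noteq> 0}"

definition hdist :: "bvec \<Rightarrow> bvec \<Rightarrow> nat" where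
  "hdist x y = card {i. x i \<noteq> y i}"

definition inner :: "nat \<Rightarrow> bvec \<Rightarrow> bvec \<Rightarrow> bit" where
  "inner n x y = (\<Sum>i<n. x i * y i)"

definition linear_code :: "nat \<Rightarrow> bvec set \<Rightarrow> bool" where
  "linear_code n C \<longleftrightarrow> C \<subseteq> vecs n \<and> vzero \<in> C \<and> (\<forall>x\<in>C. \<forall>y\<in>C. vadd x y \<in> C)"

text \<open>GF(2)-span and linear independence (coefficients are 0 or 1)\<close>
definition span2 :: "bvec set \<Rightarrow> bvec set" where
  "span2 B = {vsum T | T. T \<subseteq> B}"

definition lin_indep2 :: "bvec set \<Rightarrow> bool" where
  "lin_indep2 B \<longleftrightarrow> (\<forall>T\<subseteq>B. T \<noteq> {} \<longrightarrow> vsum T \<noteq> vzero)"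

definition has_dim :: "bvec set \<Rightarrow> nat \<Rightarrow> bool" where
  "has_dim C k \<longleftrightarrow> (\<exists>B. finite B \<and> B \<subseteq> C \<and> lin_indep2 B \<and> span2 B = C \<and> card B = k)"

definition min_dist :: "bvec set \<Rightarrow> nat" where
  "min_dist C = Min {hdist x y | x y. x \<in> C \<and> y \<in> C \<and> x \<noteq> y}"

text \<open>C is a binary [n,k,d] linear code (k >= 1 so that d is defined)\<close>
definition is_code :: "nat \<Rightarrow> nat \<Rightarrow> nat \<Rightarrow> bvec set \<Rightarrow> bool" where
  "is_code n k d C \<longleftrightarrow> linear_code n C \<and> has_dim C k \<and> 1 \<le> k \<and> min_dist C = d"

definition even_like :: "bvec set \<Rightarrow> bool" where
  "even_like C \<longleftrightarrow> (\<forall>x\<in>C. even (wt x))"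

definition odd_like :: "bvec set \<Rightarrow> bool" where
  "odd_like C \<longleftrightarrow> \<not> even_like C"

definition euclid_dual :: "nat \<Rightarrow> bvec set \<Rightarrow> bvec set" where
  "euclid_dual n C = {y \<in> vecs n. \<forall>x\<in>C. inner n x y = 0}"

definition hull :: "nat \<Rightarrow> bvec set \<Rightarrow> bvec set" where
  "hull n C = C \<inter> euclid_dual n C"

definition self_orth :: "nat \<Rightarrow> bvec set \<Rightarrow> bool" where
  "self_orth n C \<longleftrightarrow> linear_code n C \<and> (\<exists>k. has_dim C k \<and> has_dim (hull n C) k)"

definition almost_self_orth :: "nat \<Rightarrow> bvec set \<Rightarrow> bool" where
  "almost_self_orth n C \<longleftrightarrow> linear_code n C \<and> (\<exists>k. has_dim C (k + 1) \<and> has_dim (hull n C) k)"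

definition concat_vec :: "nat \<Rightarrow> bvec \<Rightarrow> bvec \<Rightarrow> bvec" where
  "concat_vec n u w = (\<lambda>i. if i < n then u i else w (i - n))"

definition uuv :: "nat \<Rightarrow> bvec set \<Rightarrow> bvec set \<Rightarrow> bvec set" where
  "uuv n C1 C2 = {concat_vec n u (vadd u v) | u v. u \<in> C1 \<and> v \<in> C2}"

end

theory Submission
  imports Defs
begin

(*
  C is the direct sum of the diagonal code {(u | u) : u \<in> C1}, a linear image of C1, and the
  line spanned by e = (0 | 1); hence dim C = k1 + 1. Its nonzero weights are 2 wt u for nonzero
  u \<in> C1, and n, so d(C) = min (2 d1) n. Since C1 is even-like, u \<cdot> 1 = wt u = 0 in GF(2)
  for every u \<in> C1, so the inner product of (u | u + v) and (u' | u' + v') collapses to v \<cdot> v',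
  which is n mod 2 for v = v' = 1 and 0 otherwise. For even n, therefore, C is even-like and
  self-orthogonal; for odd n, C is odd-like (e has weight n) and its hull is the diagonal code,
  of dimension k1. Self-orthogonality and almost self-orthogonality exclude each other because
  the dimension of a code is unique.
*)

section \<open>Binary vectors\<close>

(* The default simp rules turn bit arithmetic into xor/and, which obstructs reasoning with sums. *)
declare add_bit_eq_xor [simp del] mult_bit_eq_and [simp del]

lemma bit_add_self [simp]: "(x::bit) + x = 0"
  by (cases x) (simp_all add: add_bit_eq_xor)

lemma bit_add_self_left [simp]: "(x::bit) + (x + y) = y"
  by (metis add.assoc add_0 bit_add_self)

lemma bit_add_eq_0_iff: "(x::bit) + y = 0 \<longleftrightarrow> x = y"
  by (metis add_0 bit_add_self_left bit_add_self)

lemma of_nat_bit_eq_0_iff: "(of_nat m :: bit) = 0 \<longleftrightarrow> even m"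
  by (induction m) (auto simp: add_bit_eq_xor)

lemma sum_lessThan_double:
  fixes f :: "nat \<Rightarrow> 'a::comm_monoid_add"
  shows "(\<Sum>i<2 * n. f i) = (\<Sum>i<n. f i) + (\<Sum>i<n. f (n + i))"
proof -
  have "(\<Sum>i<n + m. f i) = (\<Sum>i<n. f i) + (\<Sum>i<m. f (n + i))" for m
    by (induction m) (simp_all add: add.assoc)
  then show ?thesis
    by (simp add: mult_2)
qed

lemma vadd_apply: "vadd x y i = x i + y i"
  by (simp add: vadd_def)

lemma vzero_apply: "vzero i = 0"
  by (simp add: vzero_def)

lemma ones_apply: "ones n i = (if i < n then 1 else 0)"
  by (simp add: ones_def)

lemma concat_vec_apply: "concat_vec n a b i = (if i < n then a i else b (i - n))"
  by (simp add: concat_vec_def)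

lemma vadd_vzero [simp]: "vadd x vzero = x" "vadd vzero x = x"
  by (simp_all add: fun_eq_iff vadd_apply vzero_apply)

lemma vadd_self [simp]: "vadd x x = vzero"
  by (simp add: fun_eq_iff vadd_apply vzero_apply)

lemma vadd_eq_vzero_iff: "vadd x y = vzero \<longleftrightarrow> x = y"
  by (simp add: fun_eq_iff vadd_apply vzero_apply bit_add_eq_0_iff)

lemma vadd_commute: "vadd x y = vadd y x"
  by (simp add: fun_eq_iff vadd_apply add.commute)

lemma vecs_0: "vecs 0 = {vzero}"
  by (auto simp: vecs_def fun_eq_iff vzero_apply)

lemma vzero_in_vecs: "vzero \<in> vecs n"
  by (simp add: vecs_def vzero_apply)

lemma vadd_in_vecs: "x \<in> vecs n \<Longrightarrow> y \<in> vecs n \<Longrightarrow> vadd x y \<in> vecs n"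
  by (simp add: vecs_def vadd_apply)

lemma ones_in_vecs: "ones n \<in> vecs n"
  by (simp add: vecs_def ones_apply)

lemma ones_eq_vzero_iff: "ones n = vzero \<longleftrightarrow> n = 0"
  by (auto simp: fun_eq_iff ones_apply vzero_apply)

lemma concat_vec_in_vecs:
  "a \<in> vecs n \<Longrightarrow> b \<in> vecs n \<Longrightarrow> concat_vec n a b \<in> vecs (2 * n)"
  by (simp add: vecs_def concat_vec_apply)

lemma vadd_concat_vec:
  "vadd (concat_vec n a b) (concat_vec n a' b') = concat_vec n (vadd a a') (vadd b b')"
  by (simp add: fun_eq_iff vadd_apply concat_vec_apply)

lemma concat_vec_eq_iff:
  assumes "a \<in> vecs n" "b \<in> vecs n" "a' \<in> vecs n" "b' \<in> vecs n"
  shows "concat_vec n a b = concat_vec n a' b' \<longleftrightarrow> a = a' \<and> b = b'"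
proof
  assume eq: "concat_vec n a b = concat_vec n a' b'"
  have "a i = a' i \<and> b i = b' i" for i
  proof (cases "i < n")
    case True
    then show ?thesis
      using fun_cong[OF eq, of i] fun_cong[OF eq, of "n + i"] by (simp add: concat_vec_apply)
  next
    case False
    then show ?thesis
      using assms by (simp add: vecs_def)
  qed
  then show "a = a' \<and> b = b'"
    by (simp add: fun_eq_iff)
qed simp

lemma concat_vec_vzero [simp]: "concat_vec n vzero vzero = vzero"
  by (simp add: fun_eq_iff concat_vec_apply vzero_apply)

lemma concat_vec_eq_vzero_iff:
  assumes "a \<in> vecs n" "b \<in> vecs n"
  shows "concat_vec n a b = vzero \<longleftrightarrow> a = vzero \<and> b = vzero"
  using concat_vec_eq_iff[OF assms vzero_in_vecs vzero_in_vecs] by simp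

lemma vsum_empty [simp]: "vsum {} = vzero"
  by (simp add: vsum_def vzero_def)

lemma vsum_singleton [simp]: "vsum {x} = x"
  by (simp add: vsum_def)

lemma vsum_insert: "finite T \<Longrightarrow> x \<notin> T \<Longrightarrow> vsum (insert x T) = vadd x (vsum T)"
  by (simp add: vsum_def vadd_def)

lemma vadd_vsum_eq_vsum_sym_diff:
  assumes "finite T" "finite T'"
  shows "vadd (vsum T) (vsum T') = vsum (sym_diff T T')"
proof -
  have "(\<Sum>b\<in>T. b i) + (\<Sum>b\<in>T'. b i) = (\<Sum>b\<in>T - T'. b i) + (\<Sum>b\<in>T' - T. b i)" for i
    using sum.Int_Diff[OF assms(1), of "\<lambda>b. b i" T'] sum.Int_Diff[OF assms(2), of "\<lambda>b. b i" T]
    by (simp add: Int_commute ac_simps)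
  then show ?thesis
    using assms by (simp add: vsum_def vadd_apply fun_eq_iff sum.union_disjoint Diff_Int_distrib2)
qed

section \<open>Dimension of GF(2)-subspaces\<close>

lemma span2_eq_image_Pow: "span2 B = vsum ` Pow B"
  unfolding span2_def by blast

lemma vzero_in_span2: "vzero \<in> span2 B"
  unfolding span2_eq_image_Pow by (metis Pow_bottom image_eqI vsum_empty)

lemma has_dimI:
  "finite B \<Longrightarrow> B \<subseteq> S \<Longrightarrow> lin_indep2 B \<Longrightarrow> span2 B = S \<Longrightarrow> card B = k \<Longrightarrow> has_dim S k"
  unfolding has_dim_def by blast

lemma inj_on_vsum_Pow:
  assumes "finite B" "lin_indep2 B"
  shows "inj_on vsum (Pow B)"
proof (rule inj_onI)
  fix T T' assume T: "T \<in> Pow B" "T' \<in> Pow B" and eq: "vsum T = vsum T'"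
  have "finite T" "finite T'"
    using T assms(1) by (auto intro: finite_subset)
  then have "vsum (sym_diff T T') = vadd (vsum T) (vsum T')"
    by (simp add: vadd_vsum_eq_vsum_sym_diff)
  also have "\<dots> = vzero"
    using eq by simp
  finally have "vsum (sym_diff T T') = vzero" .
  moreover have "sym_diff T T' \<subseteq> B"
    using T by blast
  ultimately have "sym_diff T T' = {}"
    using assms(2) unfolding lin_indep2_def by blast
  then show "T = T'"
    by blast
qed

lemma card_has_dim: "has_dim S k \<Longrightarrow> card S = 2 ^ k"
proof -
  assume "has_dim S k"
  then obtain B where B: "finite B" "lin_indep2 B" "span2 B = S" "card B = k"
    unfolding has_dim_def by blast
  have "S = vsum ` Pow B"
    using B(3) by (simp add: span2_eq_image_Pow)
  then show ?thesis
    using card_image[OF inj_on_vsum_Pow[OF B(1,2)]] B(1,4) by (simp add: card_Pow)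
qed

lemma has_dim_unique: "has_dim S k \<Longrightarrow> has_dim S k' \<Longrightarrow> k = k'"
proof -
  assume "has_dim S k" "has_dim S k'"
  then have "(2::nat) ^ k = 2 ^ k'"
    by (simp add: card_has_dim[symmetric])
  then show "k = k'"
    by simp
qed

lemma has_dim_finite: "has_dim S k \<Longrightarrow> finite S"
  by (rule card_ge_0_finite) (simp add: card_has_dim)

lemma has_dim_obtain_nonzero:
  assumes "has_dim S k" "1 \<le> k"
  obtains x where "x \<in> S" "x \<noteq> vzero"
proof -
  obtain B where B: "B \<subseteq> S" "lin_indep2 B" "card B = k"
    using assms(1) unfolding has_dim_def by blast
  then obtain b where "b \<in> B"
    using assms(2) by (metis all_not_in_conv card.empty not_one_le_zero)
  then have "b \<noteq> vzero"
    using B(2)[unfolded lin_indep2_def, rule_format, of "{b}"] by simp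
  then show ?thesis
    using that \<open>b \<in> B\<close> B(1) by blast
qed

lemma span2_insert:
  assumes "finite B" "x \<notin> B"
  shows "span2 (insert x B) = span2 B \<union> vadd x ` span2 B"
proof
  show "span2 (insert x B) \<subseteq> span2 B \<union> vadd x ` span2 B"
  proof
    fix y assume "y \<in> span2 (insert x B)"
    then obtain T where T: "T \<subseteq> insert x B" "y = vsum T"
      unfolding span2_def by blast
    show "y \<in> span2 B \<union> vadd x ` span2 B"
    proof (cases "x \<in> T")
      case True
      have "T - {x} \<subseteq> B"
        using T(1) by blast
      moreover have "y = vadd x (vsum (T - {x}))"
        using vsum_insert[OF finite_subset[OF \<open>T - {x} \<subseteq> B\<close> assms(1)], of x] insert_Diff[OF True] T(2)
        by simp
      ultimately show ?thesis
        unfolding span2_def by blast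
    next
      case False
      then have "T \<subseteq> B"
        using T(1) by blast
      then show ?thesis
        using T(2) unfolding span2_def by blast
    qed
  qed
next
  have "vadd x (vsum T) \<in> span2 (insert x B)" if "T \<subseteq> B" for T
  proof -
    have "vsum (insert x T) = vadd x (vsum T)"
      using that assms by (intro vsum_insert) (auto intro: finite_subset)
    moreover have "insert x T \<subseteq> insert x B"
      using that by blast
    ultimately show ?thesis
      unfolding span2_def by (metis (mono_tags, lifting) mem_Collect_eq)
  qed
  moreover have "span2 B \<subseteq> span2 (insert x B)"
    unfolding span2_def by blast
  ultimately show "span2 B \<union> vadd x ` span2 B \<subseteq> span2 (insert x B)"
    unfolding span2_def by blast
qed

lemma has_dim_insert:
  assumes "has_dim S k" "x \<notin> S"
  shows "has_dim (S \<union> vadd x ` S) (k + 1)"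
proof -
  obtain B where B: "finite B" "B \<subseteq> S" "lin_indep2 B" "span2 B = S" "card B = k"
    using assms(1) unfolding has_dim_def by blast
  have "x \<notin> B"
    using B(2) assms(2) by blast
  have indep: "lin_indep2 (insert x B)"
    unfolding lin_indep2_def
  proof (intro allI impI)
    fix T assume T: "T \<subseteq> insert x B" "T \<noteq> {}"
    show "vsum T \<noteq> vzero"
    proof (cases "x \<in> T")
      case True
      have "T - {x} \<subseteq> B"
        using T(1) by blast
      then have "vsum (T - {x}) \<in> S"
        using B(4) unfolding span2_def by blast
      moreover have "vsum T = vadd x (vsum (T - {x}))"
        using vsum_insert[OF finite_subset[OF \<open>T - {x} \<subseteq> B\<close> B(1)], of x] insert_Diff[OF True]
        by simp
      ultimately show ?thesis
        using assms(2) by (auto simp: vadd_eq_vzero_iff)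
    next
      case False
      then have "T \<subseteq> B"
        using T(1) by blast
      then show ?thesis
        using T(2) B(3) unfolding lin_indep2_def by simp
    qed
  qed
  have "x \<in> vadd x ` S"
    using vzero_in_span2[of B] B(4) by (metis image_eqI vadd_vzero(1))
  then have "insert x B \<subseteq> S \<union> vadd x ` S"
    using B(2) by blast
  moreover have "span2 (insert x B) = S \<union> vadd x ` S"
    using span2_insert[OF B(1) \<open>x \<notin> B\<close>] B(4) by simp
  moreover have "card (insert x B) = k + 1"
    using B(1,5) \<open>x \<notin> B\<close> by simp
  ultimately show ?thesis
    using B(1) indep by (intro has_dimI) simp_all
qed

lemma additive_vzero:
  assumes "\<And>x y. f (vadd x y) = vadd (f x) (f y)"
  shows "f vzero = vzero"
  using assms[of vzero vzero] by simp

lemma vsum_image: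
  assumes "finite T" "inj_on f T" and additive: "\<And>x y. f (vadd x y) = vadd (f x) (f y)"
  shows "vsum (f ` T) = f (vsum T)"
  using assms(1,2)
proof (induction T)
  case empty
  show ?case
    using additive_vzero[OF additive] by simp
next
  case (insert x T)
  then have "f x \<notin> f ` T"
    by auto
  then show ?case
    using insert by (simp add: vsum_insert additive)
qed

lemma has_dim_image:
  assumes "has_dim S k" "inj_on f S" and additive: "\<And>x y. f (vadd x y) = vadd (f x) (f y)"
  shows "has_dim (f ` S) k"
proof -
  obtain B where B: "finite B" "B \<subseteq> S" "lin_indep2 B" "span2 B = S" "card B = k"
    using assms(1) unfolding has_dim_def by blast
  have f_vsum: "vsum (f ` T) = f (vsum T)" if "T \<subseteq> B" for T
  proof (rule vsum_image[OF _ _ additive])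
    show "finite T"
      using that B(1) by (rule finite_subset)
    show "inj_on f T"
      using that B(2) assms(2) by (blast intro: inj_on_subset)
  qed
  have "span2 (f ` B) = (\<lambda>T. vsum (f ` T)) ` Pow B"
    unfolding span2_def by (auto simp: subset_image_iff)
  also have "\<dots> = (\<lambda>T. f (vsum T)) ` Pow B"
    using f_vsum by (intro image_cong) simp_all
  also have "\<dots> = f ` S"
    unfolding B(4)[symmetric] span2_eq_image_Pow by (simp add: image_image)
  finally have span: "span2 (f ` B) = f ` S" .
  have indep: "lin_indep2 (f ` B)"
    unfolding lin_indep2_def
  proof (intro allI impI)
    fix T' assume "T' \<subseteq> f ` B" "T' \<noteq> {}"
    then obtain T where T: "T \<subseteq> B" "T \<noteq> {}" "T' = f ` T"
      by (auto simp: subset_image_iff)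
    have "vsum T \<noteq> vzero"
      using B(3) T(1,2) unfolding lin_indep2_def by simp
    moreover have "vsum T \<in> S" "vzero \<in> S"
      using T(1) B(4) vzero_in_span2[of B] unfolding span2_def by auto
    ultimately have "f (vsum T) \<noteq> f vzero"
      using assms(2) by (simp add: inj_on_eq_iff)
    then show "vsum T' \<noteq> vzero"
      using f_vsum[OF T(1)] T(3) additive_vzero[OF additive] by simp
  qed
  have "card (f ` B) = k"
    using B(2,5) assms(2) by (simp add: card_image inj_on_subset)
  then show ?thesis
    using B(1,2) indep span by (intro has_dimI) auto
qed

lemma not_self_orth_if_almost_self_orth:
  assumes "almost_self_orth n C"
  shows "\<not> self_orth n C"
proof
  assume "self_orth n C"
  then obtain k where "has_dim C k" "has_dim (hull n C) k"
    unfolding self_orth_def by blast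
  moreover obtain k' where "has_dim C (k' + 1)" "has_dim (hull n C) k'"
    using assms unfolding almost_self_orth_def by blast
  ultimately show False
    using has_dim_unique by (metis add_cancel_right_right zero_neq_one)
qed

section \<open>Weights, distances and inner products\<close>

lemma wt_eq_sum:
  assumes "x \<in> vecs m"
  shows "wt x = (\<Sum>i<m. if x i = 0 then 0 else 1)"
proof -
  have "x i = 0" if "\<not> i < m" for i
    using assms that by (simp add: vecs_def)
  then have "{i. x i \<noteq> 0} = {i \<in> {..<m}. x i \<noteq> 0}"
    by blast
  then have "wt x = (\<Sum>i\<in>{i \<in> {..<m}. x i \<noteq> 0}. 1)"
    unfolding wt_def by (simp only: card_eq_sum)
  also have "\<dots> = (\<Sum>i<m. if x i = 0 then 0 else 1)"
    by (simp only: sum.inter_filter[OF finite_lessThan]) (auto intro: sum.cong)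
  finally show ?thesis .
qed

lemma wt_concat_vec:
  assumes "a \<in> vecs n" "b \<in> vecs n"
  shows "wt (concat_vec n a b) = wt a + wt b"
  using assms
  by (simp add: wt_eq_sum[OF concat_vec_in_vecs[OF assms]] wt_eq_sum[of _ n] sum_lessThan_double
      concat_vec_apply)

lemma wt_add_wt_vadd_ones:
  assumes "u \<in> vecs n"
  shows "wt u + wt (vadd u (ones n)) = n"
proof -
  have "(if b = 0 then 0 else 1) + (if b + 1 = 0 then 0 else 1) = (1::nat)" for b :: bit
    by (cases b) (simp_all add: bit_add_eq_0_iff)
  then show ?thesis
    using assms
    by (simp add: wt_eq_sum[of _ n] vadd_in_vecs ones_in_vecs vadd_apply ones_apply
        sum.distrib[symmetric])
qed

lemma hdist_eq_wt_vadd: "hdist x y = wt (vadd x y)"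
  unfolding hdist_def wt_def by (simp add: vadd_apply bit_add_eq_0_iff)

lemma min_dist_eq_Min_wt:
  assumes "linear_code n C"
  shows "min_dist C = Min {wt z |z. z \<in> C \<and> z \<noteq> vzero}"
proof -
  have "{hdist x y |x y. x \<in> C \<and> y \<in> C \<and> x \<noteq> y} = {wt z |z. z \<in> C \<and> z \<noteq> vzero}"
  proof (intro equalityI subsetI)
    fix w assume "w \<in> {hdist x y |x y. x \<in> C \<and> y \<in> C \<and> x \<noteq> y}"
    then obtain x y where "x \<in> C" "y \<in> C" "x \<noteq> y" "w = wt (vadd x y)"
      by (auto simp: hdist_eq_wt_vadd)
    then show "w \<in> {wt z |z. z \<in> C \<and> z \<noteq> vzero}"
      using assms unfolding linear_code_def by (auto simp: vadd_eq_vzero_iff)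
  next
    fix w assume "w \<in> {wt z |z. z \<in> C \<and> z \<noteq> vzero}"
    then obtain z where "z \<in> C" "z \<noteq> vzero" "w = hdist z vzero"
      by (auto simp: hdist_eq_wt_vadd)
    then show "w \<in> {hdist x y |x y. x \<in> C \<and> y \<in> C \<and> x \<noteq> y}"
      using assms unfolding linear_code_def by auto
  qed
  then show ?thesis
    unfolding min_dist_def by simp
qed

lemma inner_concat_vec:
  "inner (2 * n) (concat_vec n a b) (concat_vec n a' b') = inner n a a' + inner n b b'"
  by (simp add: inner_def sum_lessThan_double concat_vec_apply)

lemma inner_vadd_left: "inner n (vadd x y) z = inner n x z + inner n y z"
  by (simp add: inner_def vadd_apply distrib_right sum.distrib)

lemma inner_vadd_right: "inner n z (vadd x y) = inner n z x + inner n z y"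
  by (simp add: inner_def vadd_apply distrib_left sum.distrib)

lemma inner_commute: "inner n x y = inner n y x"
  by (simp add: inner_def mult.commute)

lemma inner_vzero [simp]: "inner n x vzero = 0" "inner n vzero x = 0"
  by (simp_all add: inner_def vzero_apply)

lemma inner_ones_right:
  assumes "u \<in> vecs n"
  shows "inner n u (ones n) = of_nat (wt u)"
proof -
  have "b = of_nat (if b = 0 then 0 else 1)" for b :: bit
    by (cases b) simp_all
  then have "inner n u (ones n) = (\<Sum>i<n. of_nat (if u i = 0 then 0 else 1))"
    unfolding inner_def ones_apply by (intro sum.cong) auto
  then show ?thesis
    using assms by (simp add: wt_eq_sum[of _ n])
qed

lemma inner_ones_ones: "inner n (ones n) (ones n) = of_nat n"
  by (simp add: inner_def ones_apply)

lemma uuvI: "u \<in> C1 \<Longrightarrow> v \<in> C2 \<Longrightarrow> concat_vec n u (vadd u v) \<in> uuv n C1 C2"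
  unfolding uuv_def by blast

lemma uuvE:
  assumes "x \<in> uuv n C1 C2"
  obtains u v where "x = concat_vec n u (vadd u v)" "u \<in> C1" "v \<in> C2"
  using assms unfolding uuv_def by blast

lemma linear_code_repetition: "linear_code n {vzero, ones n}"
  unfolding linear_code_def
  by (auto simp: vzero_in_vecs ones_in_vecs vadd_commute)

lemma linear_code_uuv:
  assumes "linear_code n C1" "linear_code n C2"
  shows "linear_code (2 * n) (uuv n C1 C2)"
  unfolding linear_code_def
proof (intro conjI ballI subsetI)
  fix x assume "x \<in> uuv n C1 C2"
  then obtain u v where "x = concat_vec n u (vadd u v)" "u \<in> C1" "v \<in> C2"
    by (rule uuvE)
  then show "x \<in> vecs (2 * n)"
    using assms unfolding linear_code_def by (simp add: subset_iff concat_vec_in_vecs vadd_in_vecs)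
next
  have "vzero = concat_vec n vzero (vadd vzero vzero)"
    by simp
  moreover have "vzero \<in> C1" "vzero \<in> C2"
    using assms unfolding linear_code_def by simp_all
  ultimately show "vzero \<in> uuv n C1 C2"
    by (metis uuvI)
next
  fix x y assume xC: "x \<in> uuv n C1 C2" and yC: "y \<in> uuv n C1 C2"
  obtain u v where x: "x = concat_vec n u (vadd u v)" "u \<in> C1" "v \<in> C2"
    using xC by (rule uuvE)
  obtain u' v' where y: "y = concat_vec n u' (vadd u' v')" "u' \<in> C1" "v' \<in> C2"
    using yC by (rule uuvE)
  have "vadd x y = concat_vec n (vadd u u') (vadd (vadd u u') (vadd v v'))"
    unfolding x y vadd_concat_vec by (simp add: fun_eq_iff vadd_apply concat_vec_apply ac_simps)
  moreover have "vadd u u' \<in> C1" "vadd v v' \<in> C2"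
    using x y assms unfolding linear_code_def by simp_all
  ultimately show "vadd x y \<in> uuv n C1 C2"
    by (simp add: uuvI)
qed

section \<open>The (u | u + v) construction with the repetition code\<close>

lemma has_dim_diag:
  assumes "C \<subseteq> vecs n" "has_dim C k"
  shows "has_dim ((\<lambda>u. concat_vec n u u) ` C) k"
proof (rule has_dim_image[OF assms(2)])
  show "inj_on (\<lambda>u. concat_vec n u u) C"
  proof (rule inj_onI)
    fix x y assume "x \<in> C" "y \<in> C" "concat_vec n x x = concat_vec n y y"
    then show "x = y"
      using concat_vec_eq_iff[of x n x y y] assms(1) by blast
  qed
qed (simp add: vadd_concat_vec)

lemma uuv_repetition_eq:
  "uuv n C1 {vzero, ones n} =
     (\<lambda>u. concat_vec n u u) ` C1 \<union> vadd (concat_vec n vzero (ones n)) ` (\<lambda>u. concat_vec n u u) ` C1"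
proof -
  have "uuv n C1 {vzero, ones n} =
      (\<lambda>u. concat_vec n u (vadd u vzero)) ` C1 \<union> (\<lambda>u. concat_vec n u (vadd u (ones n))) ` C1"
    unfolding uuv_def by blast
  moreover have "concat_vec n u (vadd u (ones n)) = vadd (concat_vec n vzero (ones n)) (concat_vec n u u)" for u
    by (simp add: vadd_concat_vec vadd_commute)
  ultimately show ?thesis
    by (simp add: image_image)
qed

lemma has_dim_uuv_repetition:
  assumes "C1 \<subseteq> vecs n" "has_dim C1 k" "0 < n"
  shows "has_dim (uuv n C1 {vzero, ones n}) (k + 1)"
proof -
  have "concat_vec n vzero (ones n) \<notin> (\<lambda>u. concat_vec n u u) ` C1"
  proof
    assume "concat_vec n vzero (ones n) \<in> (\<lambda>u. concat_vec n u u) ` C1"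
    then obtain u where "u \<in> vecs n" "concat_vec n vzero (ones n) = concat_vec n u u"
      using assms(1) by blast
    then have "ones n = vzero"
      by (simp add: concat_vec_eq_iff vzero_in_vecs ones_in_vecs)
    then show False
      using assms(3) by (simp add: ones_eq_vzero_iff)
  qed
  then show ?thesis
    unfolding uuv_repetition_eq using has_dim_insert has_dim_diag[OF assms(1,2)] by blast
qed

lemma wt_diag: "u \<in> vecs n \<Longrightarrow> wt (concat_vec n u u) = 2 * wt u"
  by (simp add: wt_concat_vec)

lemma wt_concat_vadd_ones: "u \<in> vecs n \<Longrightarrow> wt (concat_vec n u (vadd u (ones n))) = n"
  by (simp add: wt_concat_vec wt_add_wt_vadd_ones vadd_in_vecs ones_in_vecs)

lemma nonzero_wts_uuv_repetition:
  assumes "C1 \<subseteq> vecs n" "vzero \<in> C1" "0 < n"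
  shows "{wt z |z. z \<in> uuv n C1 {vzero, ones n} \<and> z \<noteq> vzero} =
         insert n ((*) 2 ` {wt u |u. u \<in> C1 \<and> u \<noteq> vzero})"
proof (intro equalityI subsetI)
  fix w assume "w \<in> {wt z |z. z \<in> uuv n C1 {vzero, ones n} \<and> z \<noteq> vzero}"
  then obtain u v where u: "u \<in> C1" "v \<in> {vzero, ones n}"
    and nz: "concat_vec n u (vadd u v) \<noteq> vzero" and w: "w = wt (concat_vec n u (vadd u v))"
    unfolding uuv_def by blast
  show "w \<in> insert n ((*) 2 ` {wt u |u. u \<in> C1 \<and> u \<noteq> vzero})"
  proof (cases "v = vzero")
    case True
    then have "u \<noteq> vzero"
      using nz by auto
    moreover have "w = 2 * wt u"
      using w True u(1) assms(1) by (simp add: wt_diag subset_iff)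
    ultimately show ?thesis
      using u(1) by blast
  next
    case False
    then have "w = n"
      using u w assms(1) by (simp add: wt_concat_vadd_ones subset_iff)
    then show ?thesis
      by blast
  qed
next
  fix w assume "w \<in> insert n ((*) 2 ` {wt u |u. u \<in> C1 \<and> u \<noteq> vzero})"
  then consider "w = n" | u where "u \<in> C1" "u \<noteq> vzero" "w = 2 * wt u"
    by blast
  then show "w \<in> {wt z |z. z \<in> uuv n C1 {vzero, ones n} \<and> z \<noteq> vzero}"
  proof cases
    case 1
    have "concat_vec n vzero (vadd vzero (ones n)) \<in> uuv n C1 {vzero, ones n}"
      using assms(2) by (intro uuvI) simp_all
    moreover have "concat_vec n vzero (vadd vzero (ones n)) \<noteq> vzero"
      using assms(3) by (simp add: concat_vec_eq_iff[where a' = vzero and b' = vzero, simplified]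
          vzero_in_vecs ones_in_vecs ones_eq_vzero_iff)
    ultimately show ?thesis
      using 1 wt_concat_vadd_ones[OF vzero_in_vecs] by force
  next
    case 2
    have "concat_vec n u (vadd u vzero) \<in> uuv n C1 {vzero, ones n}"
      using 2 by (intro uuvI) simp_all
    moreover have "concat_vec n u (vadd u vzero) \<noteq> vzero"
      using 2 assms(1) by (auto simp: concat_vec_eq_vzero_iff)
    ultimately show ?thesis
      using 2 assms(1) wt_diag by force
  qed
qed

lemma is_code_uuv_repetition:
  assumes "is_code n k d C1"
  shows "is_code (2 * n) (k + 1) (min (2 * d) n) (uuv n C1 {vzero, ones n})"
proof -
  let ?C = "uuv n C1 {vzero, ones n}"
  let ?W1 = "{wt u |u. u \<in> C1 \<and> u \<noteq> vzero}"
  have lin: "linear_code n C1" and dim: "has_dim C1 k" "1 \<le> k" and d: "min_dist C1 = d"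
    using assms unfolding is_code_def by auto
  then have C1: "C1 \<subseteq> vecs n" "vzero \<in> C1"
    unfolding linear_code_def by auto
  obtain u0 where u0: "u0 \<in> C1" "u0 \<noteq> vzero"
    using has_dim_obtain_nonzero[OF dim] .
  have "0 < n"
    using u0 C1(1) vecs_0 by (metis gr0I singletonD subsetD)
  have lin_C: "linear_code (2 * n) ?C"
    using lin linear_code_repetition by (rule linear_code_uuv)
  have "finite ?W1"
    using has_dim_finite[OF dim(1)] by (simp add: setcompr_eq_image)
  moreover have "?W1 \<noteq> {}"
    using u0 by blast
  ultimately have "Min ((*) 2 ` ?W1) = 2 * d"
    using mono_Min_commute[of "(*) (2::nat)" ?W1] d min_dist_eq_Min_wt[OF lin]
    by (simp add: mono_def)
  then have "min_dist ?C = min (2 * d) n"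
    using min_dist_eq_Min_wt[OF lin_C] nonzero_wts_uuv_repetition[OF C1 \<open>0 < n\<close>]
      \<open>finite ?W1\<close> \<open>?W1 \<noteq> {}\<close>
    by (simp add: Min_insert min.commute)
  then show ?thesis
    unfolding is_code_def using lin_C has_dim_uuv_repetition[OF C1(1) dim(1) \<open>0 < n\<close>] by simp
qed

lemma even_like_uuv_repetition_iff:
  assumes "C1 \<subseteq> vecs n" "vzero \<in> C1"
  shows "even_like (uuv n C1 {vzero, ones n}) \<longleftrightarrow> even n"
proof
  assume "even_like (uuv n C1 {vzero, ones n})"
  moreover have "concat_vec n vzero (vadd vzero (ones n)) \<in> uuv n C1 {vzero, ones n}"
    using assms(2) by (intro uuvI) simp_all
  ultimately show "even n"
    unfolding even_like_def using wt_concat_vadd_ones[OF vzero_in_vecs] by metis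
next
  assume "even n"
  have "even (wt (concat_vec n u (vadd u v)))" if "u \<in> C1" "v \<in> {vzero, ones n}" for u v
    using that assms(1) \<open>even n\<close> by (auto simp: wt_diag wt_concat_vadd_ones subset_iff)
  then show "even_like (uuv n C1 {vzero, ones n})"
    unfolding even_like_def uuv_def by blast
qed

lemma inner_uuv:
  "inner (2 * n) (concat_vec n u (vadd u v)) (concat_vec n u' (vadd u' v')) =
     inner n u v' + inner n v u' + inner n v v'"
  by (simp only: inner_concat_vec inner_vadd_left inner_vadd_right) (simp add: ac_simps)

lemma inner_uuv_repetition:
  assumes "u \<in> vecs n" "u' \<in> vecs n" "even (wt u)" "even (wt u')"
    and "v \<in> {vzero, ones n}" "v' \<in> {vzero, ones n}"
  shows "inner (2 * n) (concat_vec n u (vadd u v)) (concat_vec n u' (vadd u' v')) = inner n v v'"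
proof -
  have "inner n u v' = 0" "inner n v u' = 0"
    using assms inner_ones_right inner_commute[of n v u'] by (auto simp: of_nat_bit_eq_0_iff)
  then show ?thesis
    by (simp add: inner_uuv)
qed

lemma mem_hull_iff:
  assumes "linear_code m C"
  shows "y \<in> hull m C \<longleftrightarrow> y \<in> C \<and> (\<forall>x\<in>C. inner m x y = 0)"
  using assms unfolding hull_def euclid_dual_def linear_code_def by auto

lemma inner_repetition:
  assumes "v \<in> {vzero, ones n}" "v' \<in> {vzero, ones n}"
  shows "inner n v v' = (if v = ones n \<and> v' = ones n then of_nat n else 0)"
  using assms inner_ones_ones[of n] by auto

lemma hull_uuv_repetition_even:
  assumes "linear_code n C1" "even_like C1" "even n"
  shows "hull (2 * n) (uuv n C1 {vzero, ones n}) = uuv n C1 {vzero, ones n}"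
proof -
  have "inner (2 * n) x y = 0"
    if xC: "x \<in> uuv n C1 {vzero, ones n}" and yC: "y \<in> uuv n C1 {vzero, ones n}" for x y
  proof -
    obtain u v where x: "x = concat_vec n u (vadd u v)" "u \<in> C1" "v \<in> {vzero, ones n}"
      using xC by (rule uuvE)
    obtain u' v' where y: "y = concat_vec n u' (vadd u' v')" "u' \<in> C1" "v' \<in> {vzero, ones n}"
      using yC by (rule uuvE)
    have "inner (2 * n) x y = inner n v v'"
      unfolding x(1) y(1) using x y assms(1,2) unfolding linear_code_def even_like_def
      by (intro inner_uuv_repetition) auto
    then show ?thesis
      using inner_repetition[OF x(3) y(3)] assms(3) by (simp add: of_nat_bit_eq_0_iff)
  qed
  then show ?thesis
    using mem_hull_iff[OF linear_code_uuv[OF assms(1) linear_code_repetition]] by blast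
qed

lemma hull_uuv_repetition_odd:
  assumes "linear_code n C1" "even_like C1" "odd n"
  shows "hull (2 * n) (uuv n C1 {vzero, ones n}) = (\<lambda>u. concat_vec n u u) ` C1"
proof -
  let ?C = "uuv n C1 {vzero, ones n}"
  have C1: "C1 \<subseteq> vecs n" "vzero \<in> C1" "\<And>u. u \<in> C1 \<Longrightarrow> even (wt u)"
    using assms(1,2) unfolding linear_code_def even_like_def by auto
  have inner: "inner (2 * n) (concat_vec n u (vadd u v)) (concat_vec n u' (vadd u' v')) =
      (if v = ones n \<and> v' = ones n then 1 else 0)"
    if "u \<in> C1" "u' \<in> C1" "v \<in> {vzero, ones n}" "v' \<in> {vzero, ones n}" for u u' v v'
  proof -
    have "(of_nat n :: bit) = 1"
      using assms(3) of_nat_bit_eq_0_iff bit_not_zero_iff by metis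
    then show ?thesis
      using inner_uuv_repetition[of u n u' v v'] inner_repetition[of v n v'] that C1
      by (simp add: subset_iff)
  qed
  have hull: "y \<in> hull (2 * n) ?C \<longleftrightarrow> y \<in> ?C \<and> (\<forall>x\<in>?C. inner (2 * n) x y = 0)" for y
    using mem_hull_iff[OF linear_code_uuv[OF assms(1) linear_code_repetition]] .
  show ?thesis
  proof (intro equalityI subsetI)
    fix y assume "y \<in> hull (2 * n) ?C"
    then have yC: "y \<in> ?C" and orth: "\<forall>x\<in>?C. inner (2 * n) x y = 0"
      using hull by auto
    obtain u' v' where y: "y = concat_vec n u' (vadd u' v')" "u' \<in> C1" "v' \<in> {vzero, ones n}"
      using yC by (rule uuvE)
    have "concat_vec n vzero (vadd vzero (ones n)) \<in> ?C"
      using C1(2) by (intro uuvI) simp_all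
    then have "v' \<noteq> ones n"
      using orth inner[OF C1(2) y(2) _ y(3)] y(1) by force
    then show "y \<in> (\<lambda>u. concat_vec n u u) ` C1"
      using y by auto
  next
    fix y assume "y \<in> (\<lambda>u. concat_vec n u u) ` C1"
    then obtain u' where y: "y = concat_vec n u' (vadd u' vzero)" "u' \<in> C1"
      by auto
    then have "y \<in> ?C"
      using uuvI[where v = vzero] by simp
    moreover have "inner (2 * n) x y = 0" if xC: "x \<in> ?C" for x
    proof -
      obtain u v where x: "x = concat_vec n u (vadd u v)" "u \<in> C1" "v \<in> {vzero, ones n}"
        using xC by (rule uuvE)
      have "vzero \<noteq> ones n"
        using odd_pos[OF assms(3)] ones_eq_vzero_iff[of n] by auto
      then show ?thesis
        using inner[OF x(2) y(2) x(3), of vzero] x(1) y(1) by simp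
    qed
    ultimately show "y \<in> hull (2 * n) ?C"
      using hull by blast
  qed
qed

lemma self_orth_uuv_repetition:
  assumes "is_code n k d C1" "even_like C1" "even n"
  shows "self_orth (2 * n) (uuv n C1 {vzero, ones n})"
proof -
  have "linear_code n C1"
    using assms(1) unfolding is_code_def by simp
  moreover have "linear_code (2 * n) (uuv n C1 {vzero, ones n})" "has_dim (uuv n C1 {vzero, ones n}) (k + 1)"
    using is_code_uuv_repetition[OF assms(1)] unfolding is_code_def by auto
  ultimately show ?thesis
    unfolding self_orth_def using hull_uuv_repetition_even[OF _ assms(2,3)] by auto
qed

lemma almost_self_orth_uuv_repetition:
  assumes "is_code n k d C1" "even_like C1" "odd n"
  shows "almost_self_orth (2 * n) (uuv n C1 {vzero, ones n})"
proof -
  have C1: "linear_code n C1" "has_dim C1 k"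
    using assms(1) unfolding is_code_def by simp_all
  then have "has_dim (hull (2 * n) (uuv n C1 {vzero, ones n})) k"
    using hull_uuv_repetition_odd[OF _ assms(2,3)] has_dim_diag unfolding linear_code_def by auto
  moreover have "linear_code (2 * n) (uuv n C1 {vzero, ones n})" "has_dim (uuv n C1 {vzero, ones n}) (k + 1)"
    using is_code_uuv_repetition[OF assms(1)] unfolding is_code_def by auto
  ultimately show ?thesis
    unfolding almost_self_orth_def by auto
qed

theorem corollary4:
  fixes n k1 d1 :: nat and C1 C2 C :: "bvec set"
  assumes "is_code n k1 d1 C1"
    and "even_like C1"
    and "C2 = {vzero, ones n}"
    and "is_code n 1 n C2"
    and "C = uuv n C1 C2"
  shows "(is_code (2 * n) (k1 + 1) (min (2 * d1) n) C \<and> odd_like C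
            \<longleftrightarrow> almost_self_orth (2 * n) C)
       \<and> (is_code (2 * n) (k1 + 1) (min (2 * d1) n) C \<and> even_like C
            \<longleftrightarrow> self_orth (2 * n) C)"
proof -
  have C: "C = uuv n C1 {vzero, ones n}"
    using assms(3,5) by simp
  have code: "is_code (2 * n) (k1 + 1) (min (2 * d1) n) C"
    unfolding C using assms(1) by (rule is_code_uuv_repetition)
  have even_like_iff: "even_like C \<longleftrightarrow> even n"
    unfolding C using assms(1) even_like_uuv_repetition_iff
    unfolding is_code_def linear_code_def by simp
  show ?thesis
  proof (cases "even n")
    case True
    have "self_orth (2 * n) C"
      unfolding C using assms(1,2) True by (rule self_orth_uuv_repetition)
    then show ?thesis
      using code even_like_iff True not_self_orth_if_almost_self_orth unfolding odd_like_def by blast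
  next
    case False
    have "almost_self_orth (2 * n) C"
      unfolding C using assms(1,2) False by (rule almost_self_orth_uuv_repetition)
    then show ?thesis
      using code even_like_iff False not_self_orth_if_almost_self_orth unfolding odd_like_def by blast
  qed
qed

end
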